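(* Let $C$ be a contractible globular extension and $G$ an $\infty$-groupoid of type $C$. For $n\ge1$, the groupoid $\Pi_n(G)$ does not depend on the choice of the pregroupoidal structure on $C$: if two pregroupoidal structures on $C$ are given, the two resulting graphs $\Pi_n(G)$ coincide and their compositions and identities coincide.
   Context: The globe category $\mathbb{G}$ has objects $D_n$ ($n\ge0$), generated by $\sigma_n,\tau_n\colon D_{n-1}\to D_n$ ($n\ge1$) with $\sigma_{n+1}\sigma_n=\tau_{n+1}\sigma_n$, $\sigma_{n+1}\tau_n=\tau_{n+1}\tau_n$; $\sigma^i_j=\sigma_i\cdots\sigma_{j+1}$, $\tau^i_j=\tau_i\cdots\tau_{j+1}$. A table of dimensions: integers $i_1,\dots,i_n,i'_1,\dots,i'_{n-1}$ with $i_k>i'_k<i_{k+1}$; dimension = largest entry. In a category $C$ under $\mathbb{G}$, its globular sum is the colimit of $D_{i_1}\xleftarrow{\sigma^{i_1}_{i'_1}}D_{i'_1}\xrightarrow{\tau^{i_2}_{i'_1}}D_{i_2}\leftarrow\cdots\xrightarrow{\tau^{i_n}_{i'_{n-1}}}D_{i_n}$, written $D_{i_1}\amalg_{D_{i'_1}}\cdots\amalg_{D_{i'_{n-1}}}D_{i_n}$. A globular extension is a category under $\mathbb{G}$ with all globular sums. $f,g\colon D_n\to X$ are globularly parallel if $n=0$ or $f\sigma_n=g\sigma_n$, $f\tau_n=g\tau_n$; a lifting of $(f,g)$ is $h\colon D_{n+1}\to X$ with $h\sigma_{n+1}=f$, $h\tau_{n+1}=g$; $(f,g)\colon D_n\to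 S$ is admissible if globularly parallel with $S$ a globular sum of dimension $\le n+1$; $C$ is contractible if every admissible pair has a lifting. An $\infty$-groupoid of type $C$ is a presheaf $G$ on $C$ such that each canonical map $G(D_{i_1}\amalg_{D_{i'_1}}\cdots\amalg_{D_{i'_{n-1}}}D_{i_n})\to G_{i_1}\times_{G_{i'_1}}\cdots\times_{G_{i'_{n-1}}}G_{i_n}$ is bijective, where $G_i=G(D_i)$ ($i$-arrows), $s=G(\sigma_i)$, $t=G(\tau_i)$ (source, target), $s^i_j=G(\sigma^i_j)$, $t^i_j=G(\tau^i_j)$, and the fiber product consists of $(u_1,\dots,u_n)$ with $s^{i_k}_{i'_k}(u_k)=t^{i_{k+1}}_{i'_k}(u_{k+1})$. A pregroupoidal structure on $C$ consists of morphisms $\nabla^i_j\colon D_i\to D_i\amalg_{D_j}D_i$ ($i>j\ge0$), $\kappa_i\colon D_{i+1}\to D_i$, $w^i_j\colon D_i\to D_i$ with $\nabla^i_{i-1}\sigma_i=\epsilon_2\sigma_i$, $\nabla^i_{i-1}\tau_i=\epsilon_1\tau_i$ ($\epsilon_1,\epsilon_2$ the canonical inclusions of the first and second summand), $\nabla^i_j\sigma_i=(\sigma_i\amalg_{D_j}\sigma_i)\nabla^{i-1}_j$, $\nabla^i_j\tau_i=(\tau_i\amalg_{D_j}\tau_i)\nabla^{i-1}_j$ for $j<i-1$, $\kappa_i\sigma_{i+1}=\kappa_i\tau_{i+1}=\mathrm{id}$, $w^i_{i-1}\sigma_i=\tau_i$, $w^i_{i-1}\tau_i=\sigma_i$, $w^i_j\sigma_i=\sigma_iw^{i-1}_j$,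 $w^i_j\tau_i=\tau_iw^{i-1}_j$ for $j<i-1$. It induces on $G$: compositions $v\ast^i_ju=G(\nabla^i_j)(\xi)$ for $s^i_j(v)=t^i_j(u)$, $\xi$ corresponding to $(v,u)$; units $k_i=G(\kappa_i)\colon G_i\to G_{i+1}$. For $n$-arrows $u,v$, $u\sim v$ if some $(n+1)$-arrow has source $u$ and target $v$; this is an equivalence relation compatible with $\ast^n_{n-1}$. $\Pi_n(G)$ ($n\ge1$) is the graph with objects $G_{n-1}$, arrows $G_n/\sim$ with source/target induced by $s,t$, composition induced by $\ast^n_{n-1}$ and identities induced by $k_{n-1}$. *)

theory Defs
  imports Main
begin

section \<open>Categories (hom-set presentation, disjoint hom-sets)\<close>

record ('o, 'm) cat =
  obj  :: "'o set"
  hom  :: "'o \<Rightarrow> 'o \<Rightarrow> 'm set"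
  comp :: "'m \<Rightarrow> 'm \<Rightarrow> 'm"   (* comp C g f = g \<circ> f *)
  cid  :: "'o \<Rightarrow> 'm"

definition category :: "('o, 'm) cat \<Rightarrow> bool" where
  "category C \<longleftrightarrow>
     (\<forall>X Y. hom C X Y \<noteq> {} \<longrightarrow> X \<in> obj C \<and> Y \<in> obj C) \<and>
     (\<forall>X Y X' Y'. hom C X Y \<inter> hom C X' Y' \<noteq> {} \<longrightarrow> X = X' \<and> Y = Y') \<and>
     (\<forall>X \<in> obj C. cid C X \<in> hom C X X) \<and>
     (\<forall>X Y Z f g. f \<in> hom C X Y \<longrightarrow> g \<in> hom C Y Z \<longrightarrow> comp C g f \<in> hom C X Z) \<and>
     (\<forall>X Y Z W f g h. f \<in> hom C X Y \<longrightarrow> g \<in> hom C Y Z \<longrightarrow> h \<in> hom C Z W \<longrightarrow>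
        comp C h (comp C g f) = comp C (comp C h g) f) \<and>
     (\<forall>X Y f. f \<in> hom C X Y \<longrightarrow> comp C (cid C Y) f = f \<and> comp C f (cid C X) = f)"

text \<open>A functor from the globe category is given by objects D n and morphisms
  sg n, tu n : D (n-1) \<rightarrow> D n (n \<ge> 1) satisfying the globular relations.\<close>

definition globe :: "('o, 'm) cat \<Rightarrow> (nat \<Rightarrow> 'o) \<Rightarrow> (nat \<Rightarrow> 'm) \<Rightarrow> (nat \<Rightarrow> 'm) \<Rightarrow> bool" where
  "globe C D sg tu \<longleftrightarrow>
     (\<forall>n. D n \<in> obj C) \<and>
     (\<forall>n. 1 \<le> n \<longrightarrow> sg n \<in> hom C (D (n - 1)) (D n) \<and> tu n \<in> hom C (D (n - 1)) (D n)) \<and>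
     (\<forall>n. 1 \<le> n \<longrightarrow>
        comp C (sg (Suc n)) (sg n) = comp C (tu (Suc n)) (sg n) \<and>
        comp C (sg (Suc n)) (tu n) = comp C (tu (Suc n)) (tu n))"

text \<open>Iterated composites: itc C D f i j = f_i \<circ> ... \<circ> f_(j+1) : D j \<rightarrow> D i (for i \<ge> j).\<close>

fun itc :: "('o, 'm) cat \<Rightarrow> (nat \<Rightarrow> 'o) \<Rightarrow> (nat \<Rightarrow> 'm) \<Rightarrow> nat \<Rightarrow> nat \<Rightarrow> 'm" where
  "itc C D f 0 j = cid C (D j)"
| "itc C D f (Suc i) j =
     (if Suc i \<le> j then cid C (D j) else comp C (f (Suc i)) (itc C D f i j))"

text \<open>A table (i_1,...,i_n; i'_1,...,i'_(n-1)) is a pair of lists (0-indexed).\<close>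

definition is_table :: "nat list \<Rightarrow> nat list \<Rightarrow> bool" where
  "is_table is is' \<longleftrightarrow> is \<noteq> [] \<and> length is' = length is - 1 \<and>
     (\<forall>k < length is'. is' ! k < is ! k \<and> is' ! k < is ! Suc k)"

definition tdim :: "nat list \<Rightarrow> nat list \<Rightarrow> nat" where
  "tdim is is' = Max (set (is @ is'))"

definition gcocone ::
  "('o, 'm) cat \<Rightarrow> (nat \<Rightarrow> 'o) \<Rightarrow> (nat \<Rightarrow> 'm) \<Rightarrow> (nat \<Rightarrow> 'm) \<Rightarrow>
   nat list \<Rightarrow> nat list \<Rightarrow> 'o \<Rightarrow> (nat \<Rightarrow> 'm) \<Rightarrow> bool" where
  "gcocone C D sg tu is is' S e \<longleftrightarrow> S \<in> obj C \<and>
     (\<forall>k < length is. e k \<in> hom C (D (is ! k)) S) \<and>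
     (\<forall>k < length is'.
        comp C (e k) (itc C D sg (is ! k) (is' ! k)) =
        comp C (e (Suc k)) (itc C D tu (is ! Suc k) (is' ! k)))"

definition is_gsum ::
  "('o, 'm) cat \<Rightarrow> (nat \<Rightarrow> 'o) \<Rightarrow> (nat \<Rightarrow> 'm) \<Rightarrow> (nat \<Rightarrow> 'm) \<Rightarrow>
   nat list \<Rightarrow> nat list \<Rightarrow> 'o \<Rightarrow> (nat \<Rightarrow> 'm) \<Rightarrow> bool" where
  "is_gsum C D sg tu is is' S e \<longleftrightarrow> gcocone C D sg tu is is' S e \<and>
     (\<forall>X f. gcocone C D sg tu is is' X f \<longrightarrow>
        (\<exists>!h. h \<in> hom C S X \<and> (\<forall>k < length is. comp C h (e k) = f k)))"

definition globular_extension ::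
  "('o, 'm) cat \<Rightarrow> (nat \<Rightarrow> 'o) \<Rightarrow> (nat \<Rightarrow> 'm) \<Rightarrow> (nat \<Rightarrow> 'm) \<Rightarrow>
   (nat list \<Rightarrow> nat list \<Rightarrow> 'o) \<Rightarrow> (nat list \<Rightarrow> nat list \<Rightarrow> nat \<Rightarrow> 'm) \<Rightarrow> bool" where
  "globular_extension C D sg tu gs gi \<longleftrightarrow> category C \<and> globe C D sg tu \<and>
     (\<forall>is is'. is_table is is' \<longrightarrow> is_gsum C D sg tu is is' (gs is is') (gi is is'))"

definition glob_parallel ::
  "('o, 'm) cat \<Rightarrow> (nat \<Rightarrow> 'm) \<Rightarrow> (nat \<Rightarrow> 'm) \<Rightarrow> nat \<Rightarrow> 'm \<Rightarrow> 'm \<Rightarrow> bool" where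
  "glob_parallel C sg tu n f g \<longleftrightarrow> n = 0 \<or>
     (comp C f (sg n) = comp C g (sg n) \<and> comp C f (tu n) = comp C g (tu n))"

definition contractible ::
  "('o, 'm) cat \<Rightarrow> (nat \<Rightarrow> 'o) \<Rightarrow> (nat \<Rightarrow> 'm) \<Rightarrow> (nat \<Rightarrow> 'm) \<Rightarrow> bool" where
  "contractible C D sg tu \<longleftrightarrow>
     (\<forall>n is is' S e f g.
        is_table is is' \<and> tdim is is' \<le> n + 1 \<and> is_gsum C D sg tu is is' S e \<and>
        f \<in> hom C (D n) S \<and> g \<in> hom C (D n) S \<and> glob_parallel C sg tu n f g \<longrightarrow>
        (\<exists>h \<in> hom C (D (Suc n)) S.
           comp C h (sg (Suc n)) = f \<and> comp C h (tu (Suc n)) = g))"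

definition presheaf :: "('o, 'm) cat \<Rightarrow> ('o \<Rightarrow> 'a set) \<Rightarrow> ('m \<Rightarrow> 'a \<Rightarrow> 'a) \<Rightarrow> bool" where
  "presheaf C GO GM \<longleftrightarrow>
     (\<forall>X Y f. f \<in> hom C X Y \<longrightarrow> (\<forall>x \<in> GO Y. GM f x \<in> GO X)) \<and>
     (\<forall>X \<in> obj C. \<forall>x \<in> GO X. GM (cid C X) x = x) \<and>
     (\<forall>X Y Z f g. f \<in> hom C X Y \<longrightarrow> g \<in> hom C Y Z \<longrightarrow>
        (\<forall>x \<in> GO Z. GM (comp C g f) x = GM f (GM g x)))"

definition canon ::
  "('m \<Rightarrow> 'a \<Rightarrow> 'a) \<Rightarrow> (nat list \<Rightarrow> nat list \<Rightarrow> nat \<Rightarrow> 'm) \<Rightarrow> nat list \<Rightarrow> nat list \<Rightarrow> 'a \<Rightarrow> 'a list" where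
  "canon GM gi is is' x = map (\<lambda>k. GM (gi is is' k) x) [0..<length is]"

definition fiberprod ::
  "('o, 'm) cat \<Rightarrow> (nat \<Rightarrow> 'o) \<Rightarrow> (nat \<Rightarrow> 'm) \<Rightarrow> (nat \<Rightarrow> 'm) \<Rightarrow>
   ('o \<Rightarrow> 'a set) \<Rightarrow> ('m \<Rightarrow> 'a \<Rightarrow> 'a) \<Rightarrow> nat list \<Rightarrow> nat list \<Rightarrow> 'a list set" where
  "fiberprod C D sg tu GO GM is is' =
     {us. length us = length is \<and> (\<forall>k < length is. us ! k \<in> GO (D (is ! k))) \<and>
          (\<forall>k < length is'. GM (itc C D sg (is ! k) (is' ! k)) (us ! k) =
                            GM (itc C D tu (is ! Suc k) (is' ! k)) (us ! Suc k))}"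

definition infty_groupoid ::
  "('o, 'm) cat \<Rightarrow> (nat \<Rightarrow> 'o) \<Rightarrow> (nat \<Rightarrow> 'm) \<Rightarrow> (nat \<Rightarrow> 'm) \<Rightarrow>
   (nat list \<Rightarrow> nat list \<Rightarrow> 'o) \<Rightarrow> (nat list \<Rightarrow> nat list \<Rightarrow> nat \<Rightarrow> 'm) \<Rightarrow>
   ('o \<Rightarrow> 'a set) \<Rightarrow> ('m \<Rightarrow> 'a \<Rightarrow> 'a) \<Rightarrow> bool" where
  "infty_groupoid C D sg tu gs gi GO GM \<longleftrightarrow> presheaf C GO GM \<and>
     (\<forall>is is'. is_table is is' \<longrightarrow>
        bij_betw (canon GM gi is is') (GO (gs is is')) (fiberprod C D sg tu GO GM is is'))"

text \<open>nab i j : D_i \<rightarrow> D_i \<amalg>_(D_j) D_i is the chosen sum gs [i,i] [j];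
  its first/second canonical inclusions are gi [i,i] [j] 0 and gi [i,i] [j] 1.
  The map \<sigma>_i \<amalg>_(D_j) \<sigma>_i is the (unique, by the universal property) h with
  h \<circ> \<epsilon>_k = \<epsilon>_k \<circ> \<sigma>_i.\<close>

definition pregroupoidal ::
  "('o, 'm) cat \<Rightarrow> (nat \<Rightarrow> 'o) \<Rightarrow> (nat \<Rightarrow> 'm) \<Rightarrow> (nat \<Rightarrow> 'm) \<Rightarrow>
   (nat list \<Rightarrow> nat list \<Rightarrow> 'o) \<Rightarrow> (nat list \<Rightarrow> nat list \<Rightarrow> nat \<Rightarrow> 'm) \<Rightarrow>
   (nat \<Rightarrow> nat \<Rightarrow> 'm) \<Rightarrow> (nat \<Rightarrow> 'm) \<Rightarrow> (nat \<Rightarrow> nat \<Rightarrow> 'm) \<Rightarrow> bool" where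
  "pregroupoidal C D sg tu gs gi nab kap w \<longleftrightarrow>
     (\<forall>i j. j < i \<longrightarrow> nab i j \<in> hom C (D i) (gs [i, i] [j])) \<and>
     (\<forall>i. kap i \<in> hom C (D (Suc i)) (D i)) \<and>
     (\<forall>i j. j < i \<longrightarrow> w i j \<in> hom C (D i) (D i)) \<and>
     (\<forall>i. 1 \<le> i \<longrightarrow>
        comp C (nab i (i - 1)) (sg i) = comp C (gi [i, i] [i - 1] 1) (sg i) \<and>
        comp C (nab i (i - 1)) (tu i) = comp C (gi [i, i] [i - 1] 0) (tu i)) \<and>
     (\<forall>i j. j < i - 1 \<longrightarrow>
        (\<exists>h \<in> hom C (gs [i - 1, i - 1] [j]) (gs [i, i] [j]).
           comp C h (gi [i - 1, i - 1] [j] 0) = comp C (gi [i, i] [j] 0) (sg i) \<and>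
           comp C h (gi [i - 1, i - 1] [j] 1) = comp C (gi [i, i] [j] 1) (sg i) \<and>
           comp C (nab i j) (sg i) = comp C h (nab (i - 1) j)) \<and>
        (\<exists>h \<in> hom C (gs [i - 1, i - 1] [j]) (gs [i, i] [j]).
           comp C h (gi [i - 1, i - 1] [j] 0) = comp C (gi [i, i] [j] 0) (tu i) \<and>
           comp C h (gi [i - 1, i - 1] [j] 1) = comp C (gi [i, i] [j] 1) (tu i) \<and>
           comp C (nab i j) (tu i) = comp C h (nab (i - 1) j))) \<and>
     (\<forall>i. comp C (kap i) (sg (Suc i)) = cid C (D i) \<and> comp C (kap i) (tu (Suc i)) = cid C (D i)) \<and>
     (\<forall>i. 1 \<le> i \<longrightarrow>
        comp C (w i (i - 1)) (sg i) = tu i \<and> comp C (w i (i - 1)) (tu i) = sg i) \<and>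
     (\<forall>i j. j < i - 1 \<longrightarrow>
        comp C (w i j) (sg i) = comp C (sg i) (w (i - 1) j) \<and>
        comp C (w i j) (tu i) = comp C (tu i) (w (i - 1) j))"

text \<open>Induced composition v *^i_j u = G(nab i j)(\<xi>), \<xi> corresponding to (v,u).\<close>

definition gcomp ::
  "('o \<Rightarrow> 'a set) \<Rightarrow> ('m \<Rightarrow> 'a \<Rightarrow> 'a) \<Rightarrow>
   (nat list \<Rightarrow> nat list \<Rightarrow> 'o) \<Rightarrow> (nat list \<Rightarrow> nat list \<Rightarrow> nat \<Rightarrow> 'm) \<Rightarrow>
   (nat \<Rightarrow> nat \<Rightarrow> 'm) \<Rightarrow> nat \<Rightarrow> nat \<Rightarrow> 'a \<Rightarrow> 'a \<Rightarrow> 'a" where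
  "gcomp GO GM gs gi nab i j v u =
     GM (nab i j) (the_inv_into (GO (gs [i, i] [j])) (canon GM gi [i, i] [j]) [v, u])"

definition gunit :: "('m \<Rightarrow> 'a \<Rightarrow> 'a) \<Rightarrow> (nat \<Rightarrow> 'm) \<Rightarrow> nat \<Rightarrow> 'a \<Rightarrow> 'a" where
  "gunit GM kap i x = GM (kap i) x"

definition arr_sim ::
  "(nat \<Rightarrow> 'o) \<Rightarrow> (nat \<Rightarrow> 'm) \<Rightarrow> (nat \<Rightarrow> 'm) \<Rightarrow> ('o \<Rightarrow> 'a set) \<Rightarrow> ('m \<Rightarrow> 'a \<Rightarrow> 'a) \<Rightarrow>
   nat \<Rightarrow> ('a \<times> 'a) set" where
  "arr_sim D sg tu GO GM n =
     {(u, v). u \<in> GO (D n) \<and> v \<in> GO (D n) \<and>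
        (\<exists>a \<in> GO (D (Suc n)). GM (sg (Suc n)) a = u \<and> GM (tu (Suc n)) a = v)}"

definition Pi_arrows ::
  "(nat \<Rightarrow> 'o) \<Rightarrow> (nat \<Rightarrow> 'm) \<Rightarrow> (nat \<Rightarrow> 'm) \<Rightarrow> ('o \<Rightarrow> 'a set) \<Rightarrow> ('m \<Rightarrow> 'a \<Rightarrow> 'a) \<Rightarrow>
   nat \<Rightarrow> 'a set set" where
  "Pi_arrows D sg tu GO GM n = GO (D n) // arr_sim D sg tu GO GM n"

definition Pi_class ::
  "(nat \<Rightarrow> 'o) \<Rightarrow> (nat \<Rightarrow> 'm) \<Rightarrow> (nat \<Rightarrow> 'm) \<Rightarrow> ('o \<Rightarrow> 'a set) \<Rightarrow> ('m \<Rightarrow> 'a \<Rightarrow> 'a) \<Rightarrow>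
   nat \<Rightarrow> 'a \<Rightarrow> 'a set" where
  "Pi_class D sg tu GO GM n u = arr_sim D sg tu GO GM n `` {u}"

end

theory Submission
  imports Defs
begin

text \<open>
  The single mechanism of the proof: if \<open>h : D\<^sub>n\<^sub>+\<^sub>1 \<rightarrow> S\<close> is a morphism with
  \<open>h \<circ> \<sigma> = f\<close> and \<open>h \<circ> \<tau> = g\<close>, then for every \<open>x \<in> G(S)\<close> the (n+1)-arrow
  \<open>G(h)(x)\<close> goes from \<open>G(f)(x)\<close> to \<open>G(g)(x)\<close>, so \<open>G(f)(x) \<sim> G(g)(x)\<close>.
  In a contractible extension such an h exists whenever f, g are globularly
  parallel into a globular sum of dimension \<le> n+1.

  The two composition maps \<open>\<nabla>\<^sup>n\<^sub>n\<^sub>-\<^sub>1\<close>, and the two unit maps \<open>\<kappa>\<^sub>n\<^sub>-\<^sub>1\<close>, of the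
  given structures are such parallel pairs (into \<open>D\<^sub>n \<amalg>\<^bsub>D\<^sub>n\<^sub>-\<^sub>1\<^esub> D\<^sub>n\<close> and \<open>D\<^sub>n\<^sub>-\<^sub>1\<close>
  respectively), so the two induced composites and units are \<open>\<sim>\<close>-related.
  Finally, any pregroupoidal structure makes \<open>\<sim>\<close> symmetric (via w) and
  transitive (via \<open>\<nabla>\<close>), hence related arrows have equal classes.
\<close>

lemma presheaf_map:
  "presheaf C GO GM \<Longrightarrow> f \<in> hom C X Y \<Longrightarrow> x \<in> GO Y \<Longrightarrow> GM f x \<in> GO X"
  unfolding presheaf_def by blast

lemma presheaf_comp:
  "presheaf C GO GM \<Longrightarrow> f \<in> hom C X Y \<Longrightarrow> g \<in> hom C Y Z \<Longrightarrow> x \<in> GO Z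
   \<Longrightarrow> GM (comp C g f) x = GM f (GM g x)"
  unfolding presheaf_def by blast

lemma globe_sg_tu:
  assumes "globe C D sg tu"
  shows "sg (Suc k) \<in> hom C (D k) (D (Suc k))" and "tu (Suc k) \<in> hom C (D k) (D (Suc k))"
  using assms unfolding globe_def by auto

lemma itc_one_step:
  assumes "category C" "f (Suc m) \<in> hom C (D m) (D (Suc m))"
  shows "itc C D f (Suc m) m = f (Suc m)"
proof -
  have "itc C D f m m = cid C (D m)" by (cases m) auto
  then show ?thesis using assms by (simp add: category_def)
qed

lemma arr_sim_of_lift:
  assumes pre: "presheaf C GO GM" and gl: "globe C D sg tu"
    and h: "h \<in> hom C (D (Suc n)) S" and x: "x \<in> GO S"
  shows "(GM (comp C h (sg (Suc n))) x, GM (comp C h (tu (Suc n))) x) \<in> arr_sim D sg tu GO GM n"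
proof -
  have a: "GM h x \<in> GO (D (Suc n))" using presheaf_map[OF pre h x] .
  have "GM (comp C h (sg (Suc n))) x = GM (sg (Suc n)) (GM h x)"
    and "GM (comp C h (tu (Suc n))) x = GM (tu (Suc n)) (GM h x)"
    using presheaf_comp[OF pre _ h x] globe_sg_tu[OF gl] by blast+
  moreover have "GM (sg (Suc n)) (GM h x) \<in> GO (D n)" "GM (tu (Suc n)) (GM h x) \<in> GO (D n)"
    using presheaf_map[OF pre _ a] globe_sg_tu[OF gl] by blast+
  ultimately show ?thesis using a unfolding arr_sim_def by auto
qed

lemma contractible_arr_sim:
  assumes "contractible C D sg tu" and pre: "presheaf C GO GM" and gl: "globe C D sg tu"
    and "is_table is is'" "tdim is is' \<le> n + 1" "is_gsum C D sg tu is is' S e"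
    and "f \<in> hom C (D n) S" "g \<in> hom C (D n) S" "glob_parallel C sg tu n f g"
    and x: "x \<in> GO S"
  shows "(GM f x, GM g x) \<in> arr_sim D sg tu GO GM n"
proof -
  obtain h where h: "h \<in> hom C (D (Suc n)) S"
    and "comp C h (sg (Suc n)) = f" "comp C h (tu (Suc n)) = g"
    using assms(1,4-9) unfolding contractible_def by blast
  then show ?thesis using arr_sim_of_lift[OF pre gl h x] by simp
qed

lemma table_pair: "is_table [Suc m, Suc m] [m]" and tdim_pair: "tdim [Suc m, Suc m] [m] \<le> Suc m + 1"
  by (simp_all add: is_table_def tdim_def)

lemma table_disk: "is_table [m] []" and tdim_disk: "tdim [m] [] \<le> Suc m + 1"
  by (simp_all add: is_table_def tdim_def)

lemma disk_is_gsum: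
  assumes cat: "category C" and gl: "globe C D sg tu"
  shows "is_gsum C D sg tu [m] [] (D m) (\<lambda>_. cid C (D m))"
proof -
  have Dm: "D m \<in> obj C" using gl unfolding globe_def by blast
  have idr: "\<And>g. g \<in> hom C (D m) X \<Longrightarrow> comp C g (cid C (D m)) = g" for X
    using cat unfolding category_def by blast
  have "cid C (D m) \<in> hom C (D m) (D m)" using cat Dm unfolding category_def by blast
  then have "gcocone C D sg tu [m] [] (D m) (\<lambda>_. cid C (D m))"
    unfolding gcocone_def using Dm by simp
  moreover have "\<exists>!h. h \<in> hom C (D m) X \<and> (\<forall>k<length [m]. comp C h (cid C (D m)) = f k)"
    if "gcocone C D sg tu [m] [] X f" for X f
    using that idr unfolding gcocone_def by (intro ex1I[of _ "f 0"]) auto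
  ultimately show ?thesis unfolding is_gsum_def by blast
qed

lemma pair_is_gsum:
  "globular_extension C D sg tu gs gi \<Longrightarrow>
   is_gsum C D sg tu [Suc m, Suc m] [m] (gs [Suc m, Suc m] [m]) (gi [Suc m, Suc m] [m])"
  using table_pair unfolding globular_extension_def by blast

lemma pair_coprojections:
  assumes "globular_extension C D sg tu gs gi" "k < 2"
  shows "gi [Suc m, Suc m] [m] k \<in> hom C (D (Suc m)) (gs [Suc m, Suc m] [m])"
  using pair_is_gsum[OF assms(1), where m=m] assms(2) unfolding is_gsum_def gcocone_def
  by (auto simp: less_2_cases_iff)

lemma pair_element:
  assumes ge: "globular_extension C D sg tu gs gi"
    and ig: "infty_groupoid C D sg tu gs gi GO GM"
    and v: "v \<in> GO (D (Suc m))" and u: "u \<in> GO (D (Suc m))"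
    and vu: "GM (sg (Suc m)) v = GM (tu (Suc m)) u"
  defines "xi \<equiv> the_inv_into (GO (gs [Suc m, Suc m] [m])) (canon GM gi [Suc m, Suc m] [m]) [v, u]"
  shows "xi \<in> GO (gs [Suc m, Suc m] [m])"
    and "GM (gi [Suc m, Suc m] [m] 0) xi = v" and "GM (gi [Suc m, Suc m] [m] 1) xi = u"
proof -
  have cat: "category C" and gl: "globe C D sg tu" using ge unfolding globular_extension_def by auto
  have bij: "bij_betw (canon GM gi [Suc m, Suc m] [m]) (GO (gs [Suc m, Suc m] [m]))
      (fiberprod C D sg tu GO GM [Suc m, Suc m] [m])"
    using ig table_pair unfolding infty_groupoid_def by blast
  have "[v, u] \<in> fiberprod C D sg tu GO GM [Suc m, Suc m] [m]"
    using v u vu itc_one_step[where f=sg, OF cat globe_sg_tu(1)[OF gl]]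
      itc_one_step[where f=tu, OF cat globe_sg_tu(2)[OF gl]]
    by (auto simp: fiberprod_def less_Suc_eq nth_Cons')
  then have inj: "inj_on (canon GM gi [Suc m, Suc m] [m]) (GO (gs [Suc m, Suc m] [m]))"
    and im: "[v, u] \<in> canon GM gi [Suc m, Suc m] [m] ` GO (gs [Suc m, Suc m] [m])"
    using bij unfolding bij_betw_def by auto
  show "xi \<in> GO (gs [Suc m, Suc m] [m])"
    unfolding xi_def by (rule the_inv_into_into[OF inj im]) simp
  have "canon GM gi [Suc m, Suc m] [m] xi = [v, u]"
    unfolding xi_def by (rule f_the_inv_into_f[OF inj im])
  then show "GM (gi [Suc m, Suc m] [m] 0) xi = v" and "GM (gi [Suc m, Suc m] [m] 1) xi = u"
    by (simp_all add: canon_def upt_rec)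
qed

text \<open>The axioms of a pregroupoidal structure at level \<open>i = m+1, j = m\<close>,
  which are all the proof uses.\<close>

lemma pregroupoidal_codim1:
  assumes "pregroupoidal C D sg tu gs gi nab kap w"
  shows "nab (Suc m) m \<in> hom C (D (Suc m)) (gs [Suc m, Suc m] [m])"
    and "comp C (nab (Suc m) m) (sg (Suc m)) = comp C (gi [Suc m, Suc m] [m] 1) (sg (Suc m))"
    and "comp C (nab (Suc m) m) (tu (Suc m)) = comp C (gi [Suc m, Suc m] [m] 0) (tu (Suc m))"
    and "kap m \<in> hom C (D (Suc m)) (D m)"
    and "comp C (kap m) (sg (Suc m)) = cid C (D m)" and "comp C (kap m) (tu (Suc m)) = cid C (D m)"
    and "w (Suc m) m \<in> hom C (D (Suc m)) (D (Suc m))"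
    and "comp C (w (Suc m) m) (sg (Suc m)) = tu (Suc m)"
    and "comp C (w (Suc m) m) (tu (Suc m)) = sg (Suc m)"
  using assms unfolding pregroupoidal_def by (metis diff_Suc_1 le_add1 lessI plus_1_eq_Suc)+

lemma arr_sim_sym:
  assumes pg: "pregroupoidal C D sg tu gs gi nab kap w"
    and pre: "presheaf C GO GM" and gl: "globe C D sg tu"
    and uv: "(u, v) \<in> arr_sim D sg tu GO GM n"
  shows "(v, u) \<in> arr_sim D sg tu GO GM n"
proof -
  obtain a where a: "a \<in> GO (D (Suc n))"
    and "GM (sg (Suc n)) a = u" "GM (tu (Suc n)) a = v"
    using uv unfolding arr_sim_def by auto
  then show ?thesis
    using arr_sim_of_lift[OF pre gl pregroupoidal_codim1(7)[OF pg] a] pregroupoidal_codim1(8,9)[OF pg]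
    by simp
qed

text \<open>The composition \<open>\<nabla>\<close> makes \<open>\<sim>\<close> transitive: the composite of two
  consecutive (n+1)-arrows witnesses the outer relation.\<close>

lemma arr_sim_trans:
  assumes ge: "globular_extension C D sg tu gs gi"
    and ig: "infty_groupoid C D sg tu gs gi GO GM"
    and pg: "pregroupoidal C D sg tu gs gi nab kap w"
    and uv: "(u, v) \<in> arr_sim D sg tu GO GM n" and vz: "(v, z) \<in> arr_sim D sg tu GO GM n"
  shows "(u, z) \<in> arr_sim D sg tu GO GM n"
proof -
  have gl: "globe C D sg tu" using ge unfolding globular_extension_def by blast
  have pre: "presheaf C GO GM" using ig unfolding infty_groupoid_def by blast
  obtain a where a: "a \<in> GO (D (Suc n))" and as: "GM (sg (Suc n)) a = u"
    and at: "GM (tu (Suc n)) a = v"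
    using uv unfolding arr_sim_def by auto
  obtain b where b: "b \<in> GO (D (Suc n))" and bs: "GM (sg (Suc n)) b = v"
    and bt: "GM (tu (Suc n)) b = z"
    using vz unfolding arr_sim_def by auto
  define xi where
    "xi = the_inv_into (GO (gs [Suc n, Suc n] [n])) (canon GM gi [Suc n, Suc n] [n]) [b, a]"
  have xi: "xi \<in> GO (gs [Suc n, Suc n] [n])"
    and xi0: "GM (gi [Suc n, Suc n] [n] 0) xi = b" and xi1: "GM (gi [Suc n, Suc n] [n] 1) xi = a"
    using pair_element[OF ge ig b a] bs at unfolding xi_def by simp_all
  have "GM (comp C (nab (Suc n) n) (sg (Suc n))) xi = u"
    using pregroupoidal_codim1(2)[OF pg] xi1 as
      presheaf_comp[OF pre globe_sg_tu(1)[OF gl] pair_coprojections[OF ge] xi] by simp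
  moreover have "GM (comp C (nab (Suc n) n) (tu (Suc n))) xi = z"
    using pregroupoidal_codim1(3)[OF pg] xi0 bt
      presheaf_comp[OF pre globe_sg_tu(2)[OF gl] pair_coprojections[OF ge] xi] by simp
  ultimately show ?thesis
    using arr_sim_of_lift[OF pre gl pregroupoidal_codim1(1)[OF pg] xi] by simp
qed

lemma Pi_class_eq:
  assumes "globular_extension C D sg tu gs gi" "infty_groupoid C D sg tu gs gi GO GM"
    and pg: "pregroupoidal C D sg tu gs gi nab kap w"
    and pq: "(p, q) \<in> arr_sim D sg tu GO GM n"
  shows "Pi_class D sg tu GO GM n p = Pi_class D sg tu GO GM n q"
proof -
  have gl: "globe C D sg tu" and pre: "presheaf C GO GM"
    using assms(1,2) unfolding globular_extension_def infty_groupoid_def by blast+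
  note symmetric = arr_sim_sym[OF pg pre gl] and transitive = arr_sim_trans[OF assms(1,2) pg]
  show ?thesis unfolding Pi_class_def using pq symmetric transitive by blast
qed

lemma nab_parallel:
  assumes "pregroupoidal C D sg tu gs gi nab1 kap1 w1" "pregroupoidal C D sg tu gs gi nab2 kap2 w2"
  shows "glob_parallel C sg tu (Suc m) (nab1 (Suc m) m) (nab2 (Suc m) m)"
  using pregroupoidal_codim1(2,3)[OF assms(1)] pregroupoidal_codim1(2,3)[OF assms(2)]
  unfolding glob_parallel_def by simp

lemma kap_parallel:
  assumes "pregroupoidal C D sg tu gs gi nab1 kap1 w1" "pregroupoidal C D sg tu gs gi nab2 kap2 w2"
  shows "glob_parallel C sg tu (Suc m) (kap1 m) (kap2 m)"
  using pregroupoidal_codim1(5,6)[OF assms(1)] pregroupoidal_codim1(5,6)[OF assms(2)]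
  unfolding glob_parallel_def by simp

theorem proposition4:
  fixes C :: "('o, 'm) cat" and D :: "nat \<Rightarrow> 'o" and sg tu :: "nat \<Rightarrow> 'm"
    and gs :: "nat list \<Rightarrow> nat list \<Rightarrow> 'o" and gi :: "nat list \<Rightarrow> nat list \<Rightarrow> nat \<Rightarrow> 'm"
    and GO :: "'o \<Rightarrow> 'a set" and GM :: "'m \<Rightarrow> 'a \<Rightarrow> 'a"
    and nab1 nab2 w1 w2 :: "nat \<Rightarrow> nat \<Rightarrow> 'm" and kap1 kap2 :: "nat \<Rightarrow> 'm"
    and n :: nat
  assumes "globular_extension C D sg tu gs gi"
    and "contractible C D sg tu"
    and "infty_groupoid C D sg tu gs gi GO GM"
    and "pregroupoidal C D sg tu gs gi nab1 kap1 w1"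
    and "pregroupoidal C D sg tu gs gi nab2 kap2 w2"
    and "1 \<le> n"
  shows "(\<forall>u \<in> GO (D n). \<forall>v \<in> GO (D n). GM (sg n) v = GM (tu n) u \<longrightarrow>
            Pi_class D sg tu GO GM n (gcomp GO GM gs gi nab1 n (n - 1) v u) =
            Pi_class D sg tu GO GM n (gcomp GO GM gs gi nab2 n (n - 1) v u))
       \<and> (\<forall>x \<in> GO (D (n - 1)).
            Pi_class D sg tu GO GM n (gunit GM kap1 (n - 1) x) =
            Pi_class D sg tu GO GM n (gunit GM kap2 (n - 1) x))"
proof -
  note ge = assms(1) and con = assms(2) and ig = assms(3) and P1 = assms(4) and P2 = assms(5)
  have cat: "category C" and gl: "globe C D sg tu" and pre: "presheaf C GO GM"
    using ge ig unfolding globular_extension_def infty_groupoid_def by blast+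
  note related = contractible_arr_sim[OF con pre gl] and same_class = Pi_class_eq[OF ge ig P1]
  obtain m where n: "n = Suc m" using assms(6) by (cases n) auto
  have "Pi_class D sg tu GO GM n (gcomp GO GM gs gi nab1 n (n - 1) v u) =
        Pi_class D sg tu GO GM n (gcomp GO GM gs gi nab2 n (n - 1) v u)"
    if "u \<in> GO (D n)" "v \<in> GO (D n)" "GM (sg n) v = GM (tu n) u" for u v
    using same_class related[OF table_pair tdim_pair pair_is_gsum[OF ge]
        pregroupoidal_codim1(1)[OF P1] pregroupoidal_codim1(1)[OF P2] nab_parallel[OF P1 P2]
        pair_element(1)[OF ge ig, of v m u]] that
    unfolding gcomp_def n by simp
  moreover have "Pi_class D sg tu GO GM n (gunit GM kap1 (n - 1) x) =
        Pi_class D sg tu GO GM n (gunit GM kap2 (n - 1) x)" if "x \<in> GO (D (n - 1))" for x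
    using same_class related[OF table_disk tdim_disk disk_is_gsum[OF cat gl]
        pregroupoidal_codim1(4)[OF P1] pregroupoidal_codim1(4)[OF P2] kap_parallel[OF P1 P2]] that
    unfolding gunit_def n by simp
  ultimately show ?thesis by blast
qed

end
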